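(* Let $\mathcal{F}$ be an argumentation framework and $S\subseteq A_{\mathcal{F}}$. Suppose that whether or not $S$ is a $\mathit{cf2}$-extension of $\mathcal{F}$ is well-defined. Then $S\in\mathit{cf2}(\mathcal{F})$ if and only if $S\in\mathit{tfcf2}(\mathcal{F})$. Similarly, suppose that whether or not $S$ is a $\mathit{stg2}$-extension of $\mathcal{F}$ is well-defined. Then $S\in\mathit{stg2}(\mathcal{F})$ if and only if $S\in\mathit{tfstg2}(\mathcal{F})$.
   Context: An argumentation framework (AF) is a pair $\mathcal{F}=(A_{\mathcal{F}},R_{\mathcal{F}})$ with $R_{\mathcal{F}}\subseteq A_{\mathcal{F}}\times A_{\mathcal{F}}$ (possibly infinite); write $a\rightarrow b$ for $(a,b)\in R_{\mathcal{F}}$. For $S\subseteq A_{\mathcal{F}}$, $\mathcal{F}|_S=(A_{\mathcal{F}}\cap S,R_{\mathcal{F}}\cap(S\times S))$. $S$ is conflict-free if there are no $a,b\in S$ with $a\rightarrow b$; $cf(\mathcal{F})$ is the set of conflict-free sets. $S^+=\{x:\exists y\in S,\ y\rightarrow x\}$ and $S^\oplus=S\cup S^+$. $S$ is a naive extension if it is a $\subseteq$-maximal conflict-free set; $S$ is a stage extension if it is conflict-free and there is no conflict-free $T$ with $S^\oplus\subsetneq T^\oplus$. For $a\in A_{\mathcal{F}}$, $\mathrm{SCC}(a)$ (the strongly connected component of $a$) is the set of $b$ such that there are directed attack paths (possibly of length $0$) from $a$ to $b$ and from $b$ to $a$; $\mathrm{SCC}(\mathcal{F})$ is the set of these components. For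 $X,S\subseteq A_{\mathcal{F}}$, $D_S(X)=\{b\in X:\exists a\in S\setminus X,\ a\rightarrow b\}$. $\mathit{cf2}$: $S\in\mathit{cf2}(\mathcal{F})$ iff either $|\mathrm{SCC}(\mathcal{F})|=1$ and $S$ is naive in $\mathcal{F}$, or $|\mathrm{SCC}(\mathcal{F})|\neq 1$ and for each $X\in\mathrm{SCC}(\mathcal{F})$, $S\cap X\in\mathit{cf2}(\mathcal{F}|_{X\setminus D_S(X)})$ (the same definition applied recursively to the subframework, with attacks and components computed there). Unfolding this recursion gives a tree of recursive calls rooted at $(\mathcal{F},S)$; nodes whose framework has exactly one SCC (or is empty) are leaves. Whether $S$ is a $\mathit{cf2}$-extension is well-defined if this tree has no infinite branch; then $S\in\mathit{cf2}(\mathcal{F})$ iff at every leaf with exactly one SCC, the relevant part of $S$ is naive in that leaf's framework. $\mathit{stg2}$ is defined identically with "stage" in place of "naive". $\mathit{tfcf2}$, $\mathit{tfstg2}$: for $S\subseteq A_{\mathcal{F}}$, $a\in A_{\mathcal{F}}$ and ordinals $\alpha$ define $C^0_S(a)=\mathrm{SCC}(a)$; $C^{\alpha+1}_S(a)$ = the strongly connected component of $a$ in $\mathcal{F}|_{C^\alpha_S(a)\setminus D_S(C^\alpha_S(a))}$ (empty if $a$ is not in that set); for limit $\lambda$, $C^\lambda_S(a)$ = the strongly connected component of $a$ in $\mathcal{F}|_{\bigcap_{\alpha<\lambda}C^\alpha_S(a)}$. Let $\alpha_S(a)$ be the least $\alpha$ with $a\notin C^\alpha_S(a)$ or $C^{\alpha+1}_S(a)=C^\alpha_S(a)$.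 Then $S\in\mathit{tfcf2}(\mathcal{F})$ iff $S\in cf(\mathcal{F})$ and for each $a\in A_{\mathcal{F}}$, either $a\notin C^{\alpha_S(a)}_S(a)$ or $S\cap C^{\alpha_S(a)}_S(a)$ is a naive extension of $\mathcal{F}|_{C^{\alpha_S(a)}_S(a)}$; $\mathit{tfstg2}$ is the same with "stage extension" in place of "naive extension". *)

theory Defs
  imports Main
begin

text \<open>An argumentation framework: a set of arguments together with an attack relation.
  Well-formedness (attacks only between arguments) is assumed in the theorem.\<close>
type_synonym 'a AF = "'a set \<times> ('a \<times> 'a) set"

definition args :: "'a AF \<Rightarrow> 'a set" where "args F = fst F"
definition att :: "'a AF \<Rightarrow> ('a \<times> 'a) set" where "att F = snd F"

definition restrict_AF :: "'a AF \<Rightarrow> 'a set \<Rightarrow> 'a AF" where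
  "restrict_AF F S = (args F \<inter> S, att F \<inter> (S \<times> S))"

definition cf :: "'a AF \<Rightarrow> 'a set set" where
  "cf F = {S. S \<subseteq> args F \<and> \<not> (\<exists>a\<in>S. \<exists>b\<in>S. (a, b) \<in> att F)}"

definition plus_set :: "'a AF \<Rightarrow> 'a set \<Rightarrow> 'a set" where
  "plus_set F S = {x. \<exists>y\<in>S. (y, x) \<in> att F}"

definition range_set :: "'a AF \<Rightarrow> 'a set \<Rightarrow> 'a set" where
  "range_set F S = S \<union> plus_set F S"

definition naive :: "'a AF \<Rightarrow> 'a set \<Rightarrow> bool" where
  "naive F S \<longleftrightarrow> S \<in> cf F \<and> (\<forall>T\<in>cf F. S \<subseteq> T \<longrightarrow> T = S)"

definition stage :: "'a AF \<Rightarrow> 'a set \<Rightarrow> bool" where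
  "stage F S \<longleftrightarrow> S \<in> cf F \<and> \<not> (\<exists>T\<in>cf F. range_set F S \<subset> range_set F T)"

definition scc_of :: "'a AF \<Rightarrow> 'a \<Rightarrow> 'a set" where
  "scc_of F a = {b \<in> args F. (a, b) \<in> (att F)\<^sup>* \<and> (b, a) \<in> (att F)\<^sup>*}"

definition sccs :: "'a AF \<Rightarrow> 'a set set" where
  "sccs F = scc_of F ` args F"

definition Dset :: "'a AF \<Rightarrow> 'a set \<Rightarrow> 'a set \<Rightarrow> 'a set" where
  "Dset F S X = {b \<in> X. \<exists>a \<in> S - X. (a, b) \<in> att F}"

definition rec_child :: "('a AF \<times> 'a set) \<Rightarrow> ('a AF \<times> 'a set) \<Rightarrow> bool" where
  "rec_child N M \<longleftrightarrow> (let F = fst N; S = snd N in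
     \<not> (\<exists>X. sccs F = {X}) \<and>
     (\<exists>X \<in> sccs F. M = (restrict_AF F (X - Dset F S X), S \<inter> X)))"

definition rec_well_defined :: "'a AF \<Rightarrow> 'a set \<Rightarrow> bool" where
  "rec_well_defined F S \<longleftrightarrow>
     \<not> (\<exists>f. f 0 = (F, S) \<and> (\<forall>n. rec_child (f n) (f (Suc n))))"

text \<open>SCC-recursive scheme with base semantics \<open>P\<close> (naive or stage).  The least
  fixed point; on well-founded recursion trees this is the recursive definition.\<close>
inductive scc_rec :: "('a AF \<Rightarrow> 'a set \<Rightarrow> bool) \<Rightarrow> 'a AF \<Rightarrow> 'a set \<Rightarrow> bool"
  for P :: "'a AF \<Rightarrow> 'a set \<Rightarrow> bool" where
  base: "sccs F = {X} \<Longrightarrow> P F S \<Longrightarrow> scc_rec P F S"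
| step: "\<not> (\<exists>X. sccs F = {X}) \<Longrightarrow> S \<subseteq> args F \<Longrightarrow>
         (\<forall>X \<in> sccs F. scc_rec P (restrict_AF F (X - Dset F S X)) (S \<inter> X)) \<Longrightarrow>
         scc_rec P F S"

definition cf2 :: "'a AF \<Rightarrow> 'a set set" where
  "cf2 F = {S. scc_rec naive F S}"

definition stg2 :: "'a AF \<Rightarrow> 'a set set" where
  "stg2 F = {S. scc_rec stage F S}"

definition tf_succ :: "'a AF \<Rightarrow> 'a set \<Rightarrow> 'a \<Rightarrow> 'a set \<Rightarrow> 'a set" where
  "tf_succ F S a C = scc_of (restrict_AF F (C - Dset F S C)) a"

text \<open>The class \<open>{C^\<alpha>_S(a) | \<alpha> ordinal}\<close> of all stages of the transfinite sequence,
  generated from \<open>C^0\<close> by the successor step and by the limit step (SCC of \<open>a\<close> in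
  the intersection of previously generated stages).\<close>
inductive tf_stage :: "'a AF \<Rightarrow> 'a set \<Rightarrow> 'a \<Rightarrow> 'a set \<Rightarrow> bool"
  for F :: "'a AF" and S :: "'a set" and a :: 'a where
  zero: "tf_stage F S a (scc_of F a)"
| succ: "tf_stage F S a C \<Longrightarrow> tf_stage F S a (tf_succ F S a C)"
| lim: "\<CC> \<noteq> {} \<Longrightarrow> (\<forall>C \<in> \<CC>. tf_stage F S a C) \<Longrightarrow>
        tf_stage F S a (scc_of (restrict_AF F (\<Inter>\<CC>)) a)"

definition tf_final :: "'a AF \<Rightarrow> 'a set \<Rightarrow> 'a \<Rightarrow> 'a set" where
  "tf_final F S a = (THE C. tf_stage F S a C \<and> (a \<notin> C \<or> tf_succ F S a C = C))"

definition tf_ext :: "('a AF \<Rightarrow> 'a set \<Rightarrow> bool) \<Rightarrow> 'a AF \<Rightarrow> 'a set \<Rightarrow> bool" where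
  "tf_ext P F S \<longleftrightarrow> S \<in> cf F \<and>
     (\<forall>a \<in> args F. a \<notin> tf_final F S a \<or>
        P (restrict_AF F (tf_final F S a)) (S \<inter> tf_final F S a))"

definition tfcf2 :: "'a AF \<Rightarrow> 'a set set" where
  "tfcf2 F = {S. tf_ext naive F S}"

definition tfstg2 :: "'a AF \<Rightarrow> 'a set set" where
  "tfstg2 F = {S. tf_ext stage F S}"

end

theory Submission
  imports Defs
begin

text \<open>Let \<open>a\<close> be an argument with strongly connected component \<open>X\<close>. The transfinite sequence
  \<open>C\<^sup>\<alpha>\<^sub>S(a)\<close> starts with \<open>X\<close>. If \<open>a \<in> D\<^sub>S(X)\<close>, then \<open>a\<close> drops out at the next step. Otherwise,
  from the next step on, the sequence coincides with the sequence of \<open>a\<close> computed in the recursive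
  call on \<open>F|\<^bsub>X - D\<^sub>S(X)\<^esub>\<close>, because \<open>S \<inter> X\<close> attacks the same points there as \<open>S\<close> does in \<open>F\<close>.
  So the final stage of \<open>a\<close> is the same in \<open>F\<close> and in that call, and in a framework with a single
  component it is the whole framework. By induction along the recursion tree, which is
  well-founded by assumption, the SCC-recursive condition and the transfinite condition therefore
  agree at every node. The final stage is defined by a definite description, so its uniqueness has
  to be carried along the same induction.\<close>

definition wf_AF :: "'a AF \<Rightarrow> bool" where
  "wf_AF G \<longleftrightarrow> att G \<subseteq> args G \<times> args G"

abbreviation sub_AF :: "'a AF \<Rightarrow> 'a set \<Rightarrow> 'a set \<Rightarrow> 'a AF" where
  "sub_AF G T X \<equiv> restrict_AF G (X - Dset G T X)"

lemma args_restrict_AF [simp]: "args (restrict_AF G Z) = args G \<inter> Z"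
  by (simp add: restrict_AF_def args_def)

lemma att_restrict_AF [simp]: "att (restrict_AF G Z) = att G \<inter> Z \<times> Z"
  by (simp add: restrict_AF_def att_def)

lemma restrict_AF_restrict_AF [simp]:
  "restrict_AF (restrict_AF G Z) W = restrict_AF G (Z \<inter> W)"
  by (auto simp: restrict_AF_def args_def att_def)

lemma restrict_AF_args: "wf_AF G \<Longrightarrow> restrict_AF G (args G) = G"
  by (cases G) (auto simp: restrict_AF_def args_def att_def wf_AF_def)

lemma wf_AF_restrict_AF: "wf_AF G \<Longrightarrow> wf_AF (restrict_AF G Z)"
  by (auto simp: wf_AF_def)

lemma scc_of_subset_args: "scc_of G a \<subseteq> args G"
  by (auto simp: scc_of_def)

lemma scc_of_self: "a \<in> args G \<Longrightarrow> a \<in> scc_of G a"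
  by (auto simp: scc_of_def)

lemma scc_of_outside_args:
  assumes "wf_AF G" and "a \<notin> args G"
  shows "scc_of G a = {}"
proof (rule ccontr)
  assume "scc_of G a \<noteq> {}"
  then obtain b where "(b, a) \<in> (att G)\<^sup>*" and "b \<in> args G"
    by (auto simp: scc_of_def)
  then show False
    using assms by (cases rule: rtranclE) (auto simp: wf_AF_def)
qed

lemma scc_of_eq: "b \<in> scc_of G a \<Longrightarrow> scc_of G b = scc_of G a"
  unfolding scc_of_def by (auto intro: rtrancl_trans)

lemma scc_of_single_scc:
  assumes "sccs G = {X}" and "a \<in> args G"
  shows "scc_of G a = args G"
proof -
  have scc_X: "scc_of G b = X" if "b \<in> args G" for b
    using assms(1) that by (auto simp: sccs_def)
  have "args G \<subseteq> X"
    using scc_of_self[of _ G] scc_X by blast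
  moreover have "X \<subseteq> args G"
    using scc_of_subset_args[of G a] scc_X[OF assms(2)] by simp
  ultimately show ?thesis
    using scc_X[OF assms(2)] by simp
qed

lemma path_within_scc_of:
  assumes "wf_AF G" and "a \<in> args G" and "(a, c) \<in> (att G)\<^sup>*" and "(c, a) \<in> (att G)\<^sup>*"
  shows "(a, c) \<in> (att G \<inter> scc_of G a \<times> scc_of G a)\<^sup>*"
  using assms(3,4)
proof (induction rule: rtrancl_induct)
  case base
  then show ?case by simp
next
  case (step c d)
  then have "(c, a) \<in> (att G)\<^sup>*"
    by (meson converse_rtrancl_into_rtrancl)
  moreover have "c \<in> args G" "d \<in> args G"
    using step.hyps(2) assms(1) by (auto simp: wf_AF_def)
  ultimately have "(c, d) \<in> att G \<inter> scc_of G a \<times> scc_of G a"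
    using step by (auto simp: scc_of_def intro: rtrancl_into_rtrancl)
  with step.IH \<open>(c, a) \<in> (att G)\<^sup>*\<close> show ?case
    by (meson rtrancl_into_rtrancl)
qed

lemma scc_of_restrict_scc_of:
  assumes "wf_AF G"
  shows "scc_of (restrict_AF G (scc_of G a)) a = scc_of G a"
proof
  show "scc_of G a \<subseteq> scc_of (restrict_AF G (scc_of G a)) a"
  proof
    fix b assume b: "b \<in> scc_of G a"
    then have "a \<in> args G"
      using assms scc_of_outside_args by fastforce
    moreover have "b \<in> args G" "(a, b) \<in> (att G)\<^sup>*" "(b, a) \<in> (att G)\<^sup>*"
      using b by (auto simp: scc_of_def)
    moreover have "(b, a) \<in> (att G \<inter> scc_of G a \<times> scc_of G a)\<^sup>*"
      using path_within_scc_of[OF assms, of b a] calculation by (simp add: scc_of_eq[OF b])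
    ultimately show "b \<in> scc_of (restrict_AF G (scc_of G a)) a"
      using b path_within_scc_of[OF assms, of a b] by (simp add: scc_of_def)
  qed
qed (use scc_of_subset_args in fastforce)

lemma Dset_subset: "Dset G T X \<subseteq> X"
  by (auto simp: Dset_def)

lemma Dset_args: "wf_AF G \<Longrightarrow> Dset G T (args G) = {}"
  by (auto simp: Dset_def wf_AF_def)

lemma cf_disjoint_Dset: "T \<in> cf G \<Longrightarrow> T \<inter> Dset G T X = {}"
  by (auto simp: Dset_def cf_def)

lemma cf_sub_AF: "T \<in> cf G \<Longrightarrow> T \<inter> X \<in> cf (sub_AF G T X)"
  using cf_disjoint_Dset[of T G X] by (auto simp: cf_def)

lemma cf_if_cf_sub_AF:
  assumes "T \<subseteq> args G" and sub: "\<forall>X\<in>sccs G. T \<inter> X \<in> cf (sub_AF G T X)"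
  shows "T \<in> cf G"
proof -
  have "(a, b) \<notin> att G" if "a \<in> T" and "b \<in> T" for a b
  proof
    assume ab: "(a, b) \<in> att G"
    define X where "X = scc_of G b"
    have "b \<in> args G"
      using \<open>b \<in> T\<close> assms(1) by auto
    then have "b \<in> X" and "X \<in> sccs G"
      by (simp_all add: X_def scc_of_self sccs_def)
    then have cf_X: "T \<inter> X \<in> cf (sub_AF G T X)"
      using sub by blast
    then have "b \<notin> Dset G T X"
      using \<open>b \<in> T\<close> \<open>b \<in> X\<close> by (auto simp: cf_def)
    then have "a \<in> X - Dset G T X"
      using \<open>a \<in> T\<close> \<open>b \<in> X\<close> ab cf_X by (auto simp: Dset_def cf_def)
    then show False
      using \<open>a \<in> T\<close> \<open>b \<in> T\<close> \<open>b \<in> X\<close> \<open>b \<notin> Dset G T X\<close> ab cf_X by (auto simp: cf_def)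
  qed
  then show ?thesis
    using assms(1) by (auto simp: cf_def)
qed

text \<open>An attacker from \<open>T\<close> of a point of \<open>X - D\<^sub>T(X)\<close> lies in \<open>X\<close> and, as \<open>T\<close> is conflict-free,
  not in \<open>D\<^sub>T(X)\<close>; so it survives in the recursive call.\<close>
lemma Dset_sub_AF:
  assumes "T \<in> cf G" and "C \<subseteq> X - Dset G T X"
  shows "Dset (sub_AF G T X) (T \<inter> X) C = Dset G T C"
proof
  show "Dset G T C \<subseteq> Dset (sub_AF G T X) (T \<inter> X) C"
  proof
    fix b assume "b \<in> Dset G T C"
    then obtain c where b: "b \<in> C" and c: "c \<in> T" "c \<notin> C" "(c, b) \<in> att G"
      by (auto simp: Dset_def)
    have "b \<in> X - Dset G T X"
      using b assms(2) by auto
    then have "c \<in> X"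
      using c by (auto simp: Dset_def)
    moreover have "c \<notin> Dset G T X"
      using cf_disjoint_Dset[OF assms(1)] c by auto
    ultimately show "b \<in> Dset (sub_AF G T X) (T \<inter> X) C"
      using b c \<open>b \<in> X - Dset G T X\<close> by (auto simp: Dset_def)
  qed
qed (auto simp: Dset_def)

lemma tf_succ_sub_AF:
  assumes "T \<in> cf G" and "C \<subseteq> X - Dset G T X"
  shows "tf_succ (sub_AF G T X) (T \<inter> X) a C = tf_succ G T a C"
proof -
  have "(X - Dset G T X) \<inter> (C - Dset G T C) = C - Dset G T C"
    using assms(2) by auto
  then show ?thesis
    unfolding tf_succ_def using Dset_sub_AF[OF assms] by simp
qed

lemma tf_stage_subset_args: "tf_stage G T a C \<Longrightarrow> C \<subseteq> args G"
  by (induction rule: tf_stage.induct) (use scc_of_subset_args in \<open>fastforce simp: tf_succ_def\<close>)+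

lemma tf_stage_sub_AF_subset: "tf_stage (sub_AF G T X) T' a C \<Longrightarrow> C \<subseteq> X - Dset G T X"
  by (drule tf_stage_subset_args) simp

lemma tf_stage_outside_args:
  assumes "wf_AF G" and "a \<notin> args G" and "tf_stage G T a C"
  shows "C = {}"
  using assms(3)
  by (induction rule: tf_stage.induct)
    (simp_all add: tf_succ_def assms scc_of_outside_args wf_AF_restrict_AF)

lemma tf_stage_of_sub_AF:
  assumes X_def: "X = scc_of G a" and "T \<in> cf G" and "tf_stage (sub_AF G T X) (T \<inter> X) a C"
  shows "tf_stage G T a C"
  using assms(3)
proof (induction rule: tf_stage.induct)
  case zero
  show ?case
    using tf_stage.succ[OF tf_stage.zero, of G T a] by (simp add: tf_succ_def X_def)
next
  case (succ C)
  have "C \<subseteq> X - Dset G T X"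
    using tf_stage_sub_AF_subset[OF succ.hyps] .
  then show ?case
    using tf_stage.succ[OF succ.IH] tf_succ_sub_AF[OF assms(2)] by simp
next
  case (lim CC)
  obtain C where "C \<in> CC"
    using lim(1) by blast
  moreover have "tf_stage (sub_AF G T X) (T \<inter> X) a C"
    using lim(2) \<open>C \<in> CC\<close> by blast
  ultimately have "\<Inter>CC \<subseteq> X - Dset G T X"
    by (meson Inter_lower order_trans tf_stage_sub_AF_subset)
  moreover have "\<forall>C\<in>CC. tf_stage G T a C"
    using lim(2) by blast
  ultimately show ?case
    using tf_stage.lim[OF lim(1)] by (simp add: Int_absorb1)
qed

lemma tf_stage_imp_sub_AF:
  assumes X_def: "X = scc_of G a" and "wf_AF G" and "T \<in> cf G" and "tf_stage G T a C"
  shows "C = X \<or> tf_stage (sub_AF G T X) (T \<inter> X) a C"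
  using assms(4)
proof (induction rule: tf_stage.induct)
  case zero
  then show ?case by (simp add: X_def)
next
  case (succ C)
  from succ.IH show ?case
  proof
    assume "C = X"
    then show ?thesis
      using tf_stage.zero[of "sub_AF G T X" "T \<inter> X" a] by (simp add: tf_succ_def)
  next
    assume C: "tf_stage (sub_AF G T X) (T \<inter> X) a C"
    then have "C \<subseteq> X - Dset G T X"
      by (rule tf_stage_sub_AF_subset)
    then show ?thesis
      using tf_stage.succ[OF C] tf_succ_sub_AF[OF assms(3)] by simp
  qed
next
  case (lim CC)
  show ?case
  proof (cases "CC \<subseteq> {X}")
    case True
    then have "CC = {X}"
      using lim(1) by auto
    then show ?thesis
      using scc_of_restrict_scc_of[OF assms(2)] by (simp add: X_def)
  next
    case False
    define CC' where "CC' = CC - {X}"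
    obtain C where "C \<in> CC'"
      using False by (auto simp: CC'_def)
    then have "CC' \<noteq> {}"
      by blast
    have stages: "\<forall>C\<in>CC'. tf_stage (sub_AF G T X) (T \<inter> X) a C"
      using lim(2) by (auto simp: CC'_def)
    then have "\<Inter>CC' \<subseteq> X - Dset G T X"
      using \<open>C \<in> CC'\<close> by (meson Inter_lower order_trans tf_stage_sub_AF_subset)
    moreover have "\<Inter>CC = \<Inter>CC'"
      using calculation by (auto simp: CC'_def)
    ultimately show ?thesis
      using tf_stage.lim[OF \<open>CC' \<noteq> {}\<close> stages] by (simp add: Int_absorb1)
  qed
qed

lemma tf_succ_args_single_scc:
  assumes "wf_AF G" and "sccs G = {X}" and "a \<in> args G"
  shows "tf_succ G T a (args G) = args G"
  unfolding tf_succ_def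
  using Dset_args[OF assms(1)] restrict_AF_args[OF assms(1)] scc_of_single_scc[OF assms(2,3)]
  by simp

lemma tf_stage_single_scc:
  assumes "wf_AF G" and "sccs G = {X}" and "a \<in> args G"
  shows "tf_stage G T a C \<longleftrightarrow> C = args G"
proof
  assume "tf_stage G T a C"
  then show "C = args G"
  proof (induction rule: tf_stage.induct)
    case (lim CC)
    then have "\<Inter>CC = args G"
      by auto
    then show ?case
      using restrict_AF_args[OF assms(1)] scc_of_single_scc[OF assms(2,3)] by simp
  qed (simp_all add: scc_of_single_scc[OF assms(2,3)] tf_succ_args_single_scc[OF assms])
qed (use tf_stage.zero scc_of_single_scc[OF assms(2,3)] in metis)

definition final_stage :: "'a AF \<Rightarrow> 'a set \<Rightarrow> 'a \<Rightarrow> 'a set \<Rightarrow> bool" where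
  "final_stage G T a C \<longleftrightarrow> tf_stage G T a C \<and> (a \<notin> C \<or> tf_succ G T a C = C)"

lemma tf_final_eq_The: "tf_final G T a = (THE C. final_stage G T a C)"
  by (simp add: tf_final_def final_stage_def)

lemma final_stage_single_scc:
  assumes "wf_AF G" and "sccs G = {X}" and "a \<in> args G"
  shows "final_stage G T a C \<longleftrightarrow> C = args G"
  using tf_stage_single_scc[OF assms] tf_succ_args_single_scc[OF assms] by (auto simp: final_stage_def)

lemma final_stage_sub_AF:
  assumes X_def: "X = scc_of G a" and "wf_AF G" and "T \<in> cf G" and "a \<in> args G"
  shows "final_stage G T a C \<longleftrightarrow> final_stage (sub_AF G T X) (T \<inter> X) a C"
proof -
  have succ_eq: "tf_succ (sub_AF G T X) (T \<inter> X) a C = tf_succ G T a C"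
    if "tf_stage (sub_AF G T X) (T \<inter> X) a C" for C
    using tf_succ_sub_AF[OF assms(3) tf_stage_sub_AF_subset[OF that]] .
  have X_final: "final_stage (sub_AF G T X) (T \<inter> X) a X" if "final_stage G T a X"
  proof -
    have "a \<in> X"
      using X_def scc_of_self[OF assms(4)] by simp
    then have "tf_succ G T a X = X"
      using that by (simp add: final_stage_def)
    then have "tf_stage (sub_AF G T X) (T \<inter> X) a X"
      using tf_stage.zero[of "sub_AF G T X" "T \<inter> X" a] by (simp add: tf_succ_def)
    then show ?thesis
      using succ_eq \<open>tf_succ G T a X = X\<close> by (simp add: final_stage_def)
  qed
  show ?thesis
  proof
    assume final: "final_stage G T a C"
    then consider "C = X" | "tf_stage (sub_AF G T X) (T \<inter> X) a C"
      using tf_stage_imp_sub_AF[OF assms(1-3)] by (auto simp: final_stage_def)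
    then show "final_stage (sub_AF G T X) (T \<inter> X) a C"
    proof cases
      case 1
      then show ?thesis
        using X_final final by simp
    next
      case 2
      then show ?thesis
        using final succ_eq[OF 2] by (simp add: final_stage_def)
    qed
  next
    assume "final_stage (sub_AF G T X) (T \<inter> X) a C"
    then show "final_stage G T a C"
      unfolding final_stage_def using tf_stage_of_sub_AF[OF assms(1,3)] succ_eq by metis
  qed
qed

lemma final_stage_outside_args:
  assumes "wf_AF G" and "a \<notin> args G"
  shows "final_stage G T a C \<longleftrightarrow> C = {}"
  using tf_stage_outside_args[OF assms] tf_stage.zero[of G T a] scc_of_outside_args[OF assms]
  by (auto simp: final_stage_def)

lemma final_stage_attacked:
  assumes "wf_AF G" and "T \<in> cf G" and "a \<in> Dset G T (scc_of G a)"
  shows "final_stage G T a C \<longleftrightarrow> C = {}"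
proof -
  have "a \<in> args G"
    using assms(3) Dset_subset scc_of_subset_args by fast
  moreover have "a \<notin> args (sub_AF G T (scc_of G a))"
    using assms(3) by simp
  ultimately show ?thesis
    using final_stage_sub_AF[OF refl assms(1,2)]
      final_stage_outside_args[OF wf_AF_restrict_AF[OF assms(1)]] by blast
qed

definition unique_final_stages :: "'a AF \<Rightarrow> 'a set \<Rightarrow> bool" where
  "unique_final_stages G T \<longleftrightarrow> (\<forall>a\<in>args G. \<exists>!C. final_stage G T a C)"

definition tf_condition :: "('a AF \<Rightarrow> 'a set \<Rightarrow> bool) \<Rightarrow> 'a AF \<Rightarrow> 'a set \<Rightarrow> 'a \<Rightarrow> bool" where
  "tf_condition P G T a \<longleftrightarrow>
     a \<notin> tf_final G T a \<or> P (restrict_AF G (tf_final G T a)) (T \<inter> tf_final G T a)"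

lemma tf_ext_iff_tf_condition: "tf_ext P G T \<longleftrightarrow> T \<in> cf G \<and> (\<forall>a\<in>args G. tf_condition P G T a)"
  by (simp add: tf_ext_def tf_condition_def)

lemma tf_condition_attacked:
  assumes "wf_AF G" and "T \<in> cf G" and "a \<in> Dset G T (scc_of G a)"
  shows "tf_condition P G T a"
  using final_stage_attacked[OF assms] by (simp add: tf_condition_def tf_final_eq_The)

text \<open>Uniqueness of the final stage in the recursive call is what makes \<open>THE\<close> denote a stage
  there, and hence a subset of \<open>X - D\<^sub>T(X)\<close>.\<close>
lemma tf_condition_sub_AF:
  assumes X_def: "X = scc_of G a" and "wf_AF G" and "T \<in> cf G" and "a \<in> args G"
    and unique: "\<exists>!C. final_stage (sub_AF G T X) (T \<inter> X) a C"
  shows "tf_condition P G T a \<longleftrightarrow> tf_condition P (sub_AF G T X) (T \<inter> X) a"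
proof -
  define C where "C = tf_final (sub_AF G T X) (T \<inter> X) a"
  have "final_stage G T a = final_stage (sub_AF G T X) (T \<inter> X) a"
    using final_stage_sub_AF[OF assms(1-4)] by blast
  then have "tf_final G T a = C"
    unfolding C_def tf_final_eq_The by simp
  moreover have "final_stage (sub_AF G T X) (T \<inter> X) a C"
    unfolding C_def tf_final_eq_The using theI'[OF unique] .
  then have "C \<subseteq> X - Dset G T X"
    unfolding final_stage_def by (meson tf_stage_sub_AF_subset)
  then have "(X - Dset G T X) \<inter> C = C" and "T \<inter> X \<inter> C = T \<inter> C"
    by blast+
  ultimately show ?thesis
    unfolding tf_condition_def C_def[symmetric] by simp
qed

lemma unique_final_stages_single_scc:
  assumes "wf_AF G" and "sccs G = {X}"
  shows "unique_final_stages G T"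
  using final_stage_single_scc[OF assms] by (simp add: unique_final_stages_def)

lemma tf_ext_single_scc:
  assumes "wf_AF G" and "sccs G = {X}" and "T \<in> cf G"
  shows "tf_ext P G T \<longleftrightarrow> P G T"
proof -
  have "tf_condition P G T a \<longleftrightarrow> P G T" if "a \<in> args G" for a
    using assms(3) that
    by (simp add: tf_condition_def tf_final_eq_The final_stage_single_scc[OF assms(1,2)]
        restrict_AF_args[OF assms(1)] Int_absorb2 cf_def)
  moreover have "args G \<noteq> {}"
    using assms(2) by (auto simp: sccs_def)
  ultimately show ?thesis
    using assms(3) by (auto simp: tf_ext_iff_tf_condition)
qed

lemma scc_rec_single_scc:
  assumes "sccs G = {X}"
  shows "scc_rec P G T \<longleftrightarrow> P G T"
proof
  assume "scc_rec P G T"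
  then show "P G T"
    using assms by (cases rule: scc_rec.cases) auto
qed (rule scc_rec.base[OF assms])

lemma scc_rec_multiple_sccs:
  "\<not> (\<exists>X. sccs G = {X}) \<Longrightarrow>
    scc_rec P G T \<longleftrightarrow> T \<subseteq> args G \<and> (\<forall>X\<in>sccs G. scc_rec P (sub_AF G T X) (T \<inter> X))"
proof
  assume "scc_rec P G T" and "\<not> (\<exists>X. sccs G = {X})"
  then show "T \<subseteq> args G \<and> (\<forall>X\<in>sccs G. scc_rec P (sub_AF G T X) (T \<inter> X))"
    by (cases rule: scc_rec.cases) auto
qed (auto intro: scc_rec.step)

lemma scc_rec_cf:
  assumes "\<And>G T. P G T \<Longrightarrow> T \<in> cf G" and "scc_rec P G T"
  shows "T \<in> cf G"
  using assms(2) by (induction rule: scc_rec.induct) (auto intro: assms(1) cf_if_cf_sub_AF)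

lemma unique_final_stages_sub_AF:
  assumes "wf_AF G" and "T \<in> cf G"
    and unique: "\<forall>X\<in>sccs G. unique_final_stages (sub_AF G T X) (T \<inter> X)"
  shows "unique_final_stages G T"
  unfolding unique_final_stages_def
proof
  fix a assume a: "a \<in> args G"
  show "\<exists>!C. final_stage G T a C"
  proof (cases "a \<in> Dset G T (scc_of G a)")
    case True
    then show ?thesis
      using final_stage_attacked[OF assms(1,2)] by simp
  next
    case False
    then have "a \<in> args (sub_AF G T (scc_of G a))"
      using a scc_of_self by simp
    moreover have "scc_of G a \<in> sccs G"
      using a by (simp add: sccs_def)
    ultimately show ?thesis
      using unique final_stage_sub_AF[OF refl assms(1,2) a]
      by (simp add: unique_final_stages_def)
  qed
qed

lemma tf_ext_sub_AF:
  assumes "wf_AF G" and "T \<in> cf G"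
    and unique: "\<forall>X\<in>sccs G. unique_final_stages (sub_AF G T X) (T \<inter> X)"
  shows "tf_ext P G T \<longleftrightarrow> (\<forall>X\<in>sccs G. tf_ext P (sub_AF G T X) (T \<inter> X))"
proof -
  have condition_eq: "tf_condition P G T a \<longleftrightarrow> tf_condition P (sub_AF G T X) (T \<inter> X) a"
    if X: "X \<in> sccs G" and a: "a \<in> args (sub_AF G T X)" for X a
  proof -
    have "a \<in> args G" and "a \<in> X"
      using a by auto
    moreover obtain x where "X = scc_of G x"
      using X by (auto simp: sccs_def)
    then have "X = scc_of G a"
      using scc_of_eq[of a G x] \<open>a \<in> X\<close> by simp
    ultimately show ?thesis
      using tf_condition_sub_AF[OF _ assms(1,2)] unique X a by (simp add: unique_final_stages_def)
  qed
  have "tf_condition P G T a" if "a \<in> args G" and "\<forall>X\<in>sccs G. tf_ext P (sub_AF G T X) (T \<inter> X)" for a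
  proof (cases "a \<in> Dset G T (scc_of G a)")
    case True
    then show ?thesis
      using tf_condition_attacked[OF assms(1,2)] by simp
  next
    case False
    then have "a \<in> args (sub_AF G T (scc_of G a))" and "scc_of G a \<in> sccs G"
      using \<open>a \<in> args G\<close> scc_of_self by (simp_all add: sccs_def)
    then show ?thesis
      using condition_eq that(2) by (simp add: tf_ext_iff_tf_condition)
  qed
  then show ?thesis
    using condition_eq assms(2) cf_sub_AF[OF assms(2)] by (auto simp: tf_ext_iff_tf_condition)
qed

lemma rec_well_defined_induct [consumes 1, case_names step]:
  assumes "rec_well_defined F S"
    and step: "\<And>G T. (\<And>G' T'. rec_child (G, T) (G', T') \<Longrightarrow> Q G' T') \<Longrightarrow> Q G T"
  shows "Q F S"
proof (rule ccontr)
  assume "\<not> Q F S"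
  have "\<exists>M. \<not> case_prod Q M \<and> rec_child N M" if "\<not> case_prod Q N" for N
    using step that by (cases N) fastforce
  then obtain f where
    "\<forall>n. (\<not> case_prod Q (f n) \<and> (n = 0 \<longrightarrow> f n = (F, S))) \<and> rec_child (f n) (f (Suc n))"
    using dependent_nat_choice[where P = "\<lambda>n N. \<not> case_prod Q N \<and> (n = 0 \<longrightarrow> N = (F, S))"
        and Q = "\<lambda>_ N M. rec_child N M"] \<open>\<not> Q F S\<close> by blast
  then show False
    using assms(1) by (auto simp: rec_well_defined_def)
qed

lemma scc_rec_iff_tf_ext_and_unique_final_stages:
  assumes "rec_well_defined G T" and "wf_AF G" and "T \<in> cf G"
  shows "(scc_rec P G T \<longleftrightarrow> tf_ext P G T) \<and> unique_final_stages G T"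
  using assms
proof (induction rule: rec_well_defined_induct)
  case (step G T)
  show ?case
  proof (cases "\<exists>X. sccs G = {X}")
    case True
    then obtain X where "sccs G = {X}"
      by blast
    then show ?thesis
      using scc_rec_single_scc tf_ext_single_scc[OF step.prems(1) _ step.prems(2)]
        unique_final_stages_single_scc[OF step.prems(1)] by metis
  next
    case False
    have "(scc_rec P (sub_AF G T X) (T \<inter> X) \<longleftrightarrow> tf_ext P (sub_AF G T X) (T \<inter> X))
        \<and> unique_final_stages (sub_AF G T X) (T \<inter> X)" if "X \<in> sccs G" for X
      using step.IH[of "sub_AF G T X" "T \<inter> X"] False that
        wf_AF_restrict_AF[OF step.prems(1)] cf_sub_AF[OF step.prems(2)]
      by (auto simp: rec_child_def Let_def)
    moreover have "T \<subseteq> args G"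
      using step.prems(2) by (simp add: cf_def)
    ultimately show ?thesis
      using scc_rec_multiple_sccs[OF False] tf_ext_sub_AF[OF step.prems]
        unique_final_stages_sub_AF[OF step.prems] by auto
  qed
qed

lemma scc_rec_iff_tf_ext:
  assumes P_cf: "\<And>G T. P G T \<Longrightarrow> T \<in> cf G"
    and "rec_well_defined G T" and "wf_AF G"
  shows "scc_rec P G T \<longleftrightarrow> tf_ext P G T"
proof (cases "T \<in> cf G")
  case True
  then show ?thesis
    using scc_rec_iff_tf_ext_and_unique_final_stages[OF assms(2,3)] by blast
next
  case False
  then show ?thesis
    using scc_rec_cf[of P G T] P_cf by (auto simp: tf_ext_def)
qed

theorem theorem1:
  fixes A :: "'a set" and R :: "('a \<times> 'a) set" and S :: "'a set"
  assumes "R \<subseteq> A \<times> A" and "S \<subseteq> A"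
  shows "(rec_well_defined (A, R) S \<longrightarrow> (S \<in> cf2 (A, R) \<longleftrightarrow> S \<in> tfcf2 (A, R)))
       \<and> (rec_well_defined (A, R) S \<longrightarrow> (S \<in> stg2 (A, R) \<longleftrightarrow> S \<in> tfstg2 (A, R)))"
proof -
  have wf: "wf_AF (A, R)"
    using assms(1) by (simp add: wf_AF_def args_def att_def)
  have naive_cf: "naive G T \<Longrightarrow> T \<in> cf G" and stage_cf: "stage G T \<Longrightarrow> T \<in> cf G"
    for G and T :: "'a set"
    by (simp_all add: naive_def stage_def)
  show ?thesis
    using scc_rec_iff_tf_ext[OF naive_cf _ wf] scc_rec_iff_tf_ext[OF stage_cf _ wf]
    by (simp add: cf2_def tfcf2_def stg2_def tfstg2_def)
qed

end
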